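(* Let $\theta_0\in\mathbb{R}$, let $B\ge1$, and let $\hat\theta_1,\dots,\hat\theta_B$ be independent real-valued random variables. Set $\Delta:=\max_{1\le j\le B}\mathrm{MedBias}_{\theta_0}(\hat\theta_j)$. Then \[ \mathbb{P}\Big(\theta_0\notin\big[\min_{1\le j\le B}\hat\theta_j,\ \max_{1\le j\le B}\hat\theta_j\big]\Big)\le\Big(\tfrac12-\Delta\Big)^B+\Big(\tfrac12+\Delta\Big)^B . \]
   Context: For a real-valued random variable $\hat\theta$ and $\theta_0\in\mathbb{R}$, the median bias is $\mathrm{MedBias}_{\theta_0}(\hat\theta):=\big(\tfrac12-\min\{\mathbb{P}(\hat\theta-\theta_0\ge0),\ \mathbb{P}(\hat\theta-\theta_0\le0)\}\big)_+$, where $(x)_+=\max\{x,0\}$. *)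

theory Defs
  imports "HOL-Probability.Probability"
begin

definition MedBias :: "'a measure \<Rightarrow> real \<Rightarrow> ('a \<Rightarrow> real) \<Rightarrow> real" where
  "MedBias M \<theta>0 X =
     max (1/2 - min (measure M {\<omega> \<in> space M. X \<omega> - \<theta>0 \<ge> 0})
                    (measure M {\<omega> \<in> space M. X \<omega> - \<theta>0 \<le> 0})) 0"

end

theory Submission
  imports Defs
begin

text \<open>If \<open>\<theta>0\<close> lies outside the range of the sample, either every estimate exceeds \<open>\<theta>0\<close> or every
  estimate falls short of it. By independence the two events have probabilities
  \<open>\<Prod>j a\<^sub>j\<close> and \<open>\<Prod>j b\<^sub>j\<close>, where \<open>a\<^sub>j = P(X\<^sub>j > \<theta>0)\<close> and \<open>b\<^sub>j = P(X\<^sub>j < \<theta>0)\<close> satisfy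
  \<open>a\<^sub>j, b\<^sub>j \<le> 1/2 + \<Delta>\<close> and \<open>a\<^sub>j + b\<^sub>j \<le> 1\<close>. Under these constraints \<open>\<Prod>a\<^sub>j + \<Prod>b\<^sub>j\<close> is maximised by
  the extreme choice \<open>a\<^sub>j = 1/2 + \<Delta>\<close>, \<open>b\<^sub>j = 1/2 - \<Delta>\<close>, which an induction on the number of factors
  confirms.\<close>

lemma mult_add_mult_le_of_le:
  fixes a b c d P Q u v :: real
  assumes "a + b \<le> 1" "a \<le> d" "c + d = 1" "0 \<le> c" "c \<le> d"
    and "0 \<le> Q" "Q \<le> P" "P \<le> v" "P + Q \<le> u + v"
  shows "a * P + b * Q \<le> c * u + d * v"
proof -
  have "a * P + b * Q \<le> a * P + (1 - a) * Q"
    using assms by (simp add: mult_right_mono)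
  also have "\<dots> = Q + a * (P - Q)" by (simp add: algebra_simps)
  also have "\<dots> \<le> Q + d * (P - Q)" using assms by (simp add: mult_right_mono)
  also have "\<dots> = c * (P + Q) + (d - c) * P"
    using \<open>c + d = 1\<close> by (simp add: algebra_simps flip: distrib_left)
  also have "\<dots> \<le> c * (u + v) + (d - c) * v"
  proof (rule add_mono)
    show "c * (P + Q) \<le> c * (u + v)" using assms by (intro mult_left_mono) auto
    show "(d - c) * P \<le> (d - c) * v" using assms by (intro mult_left_mono) auto
  qed
  also have "\<dots> = c * u + d * v" by (simp add: algebra_simps)
  finally show ?thesis .
qed

lemma mult_add_mult_le:
  fixes a b c d P Q u v :: real
  assumes "a + b \<le> 1" "a \<le> d" "b \<le> d" "c + d = 1" "0 \<le> c" "c \<le> d"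
    and "0 \<le> P" "0 \<le> Q" "P \<le> v" "Q \<le> v" "P + Q \<le> u + v"
  shows "a * P + b * Q \<le> c * u + d * v"
proof (cases "Q \<le> P")
  case True
  then show ?thesis using assms by (intro mult_add_mult_le_of_le) auto
next
  case False
  then have "b * Q + a * P \<le> c * u + d * v"
    using assms by (intro mult_add_mult_le_of_le) auto
  then show ?thesis by simp
qed

lemma prod_add_prod_le_power_add_power:
  fixes a b :: "'i \<Rightarrow> real" and c d :: real
  assumes "finite I"
    and "\<And>j. j \<in> I \<Longrightarrow> 0 \<le> a j \<and> 0 \<le> b j \<and> a j \<le> d \<and> b j \<le> d \<and> a j + b j \<le> 1"
    and "c + d = 1" "0 \<le> c" "c \<le> d"
  shows "(\<Prod>j\<in>I. a j) + (\<Prod>j\<in>I. b j) \<le> c ^ card I + d ^ card I"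
  using assms(1,2)
proof (induction I rule: finite_induct)
  case empty
  then show ?case by simp
next
  case (insert i I)
  have "(\<Prod>j\<in>I. a j) \<le> d ^ card I" "(\<Prod>j\<in>I. b j) \<le> d ^ card I"
    using insert.prems prod_mono[of I a "\<lambda>_. d"] prod_mono[of I b "\<lambda>_. d"] by auto
  moreover have "0 \<le> (\<Prod>j\<in>I. a j)" "0 \<le> (\<Prod>j\<in>I. b j)"
    using insert.prems by (auto intro: prod_nonneg)
  ultimately have "a i * (\<Prod>j\<in>I. a j) + b i * (\<Prod>j\<in>I. b j)
      \<le> c * c ^ card I + d * d ^ card I"
    using insert assms(3-5) by (intro mult_add_mult_le) auto
  then show ?case using insert by simp
qed

lemma MedBias_le_half: "MedBias M \<theta>0 X \<le> 1/2"
  unfolding MedBias_def by (intro max.boundedI) auto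

lemma (in prob_space) prob_greater_le_half_add_MedBias:
  assumes "X \<in> borel_measurable M"
  shows "prob (X -` {\<theta>0<..} \<inter> space M) \<le> 1/2 + MedBias M \<theta>0 X"
proof -
  have "X -` {\<theta>0<..} \<inter> space M = space M - {\<omega> \<in> space M. X \<omega> - \<theta>0 \<le> 0}" by auto
  moreover have "{\<omega> \<in> space M. X \<omega> - \<theta>0 \<le> 0} \<in> events" using assms by measurable
  ultimately show ?thesis
    by (simp add: prob_compl MedBias_def)
qed

lemma (in prob_space) prob_less_le_half_add_MedBias:
  assumes "X \<in> borel_measurable M"
  shows "prob (X -` {..<\<theta>0} \<inter> space M) \<le> 1/2 + MedBias M \<theta>0 X"
proof -
  have "X -` {..<\<theta>0} \<inter> space M = space M - {\<omega> \<in> space M. X \<omega> - \<theta>0 \<ge> 0}" by auto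
  moreover have "{\<omega> \<in> space M. X \<omega> - \<theta>0 \<ge> 0} \<in> events" using assms by measurable
  ultimately show ?thesis
    by (simp add: prob_compl MedBias_def)
qed

lemma (in prob_space) prob_greater_add_prob_less_le_1:
  fixes X :: "'a \<Rightarrow> real"
  assumes "X \<in> borel_measurable M"
  shows "prob (X -` {\<theta>0<..} \<inter> space M) + prob (X -` {..<\<theta>0} \<inter> space M) \<le> 1"
proof -
  have "X -` {\<theta>0<..} \<inter> space M \<in> events" "X -` {..<\<theta>0} \<inter> space M \<in> events"
    using assms by (auto intro!: measurable_sets borel_open open_greaterThan open_lessThan)
  then have "prob (X -` {\<theta>0<..} \<inter> space M) + prob (X -` {..<\<theta>0} \<inter> space M)
      = prob ((X -` {\<theta>0<..} \<inter> space M) \<union> (X -` {..<\<theta>0} \<inter> space M))"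
    by (intro finite_measure_Union[symmetric]) auto
  then show ?thesis by simp
qed

lemma not_in_Min_Max_iff:
  fixes S :: "real set"
  assumes "finite S" "S \<noteq> {}"
  shows "x \<notin> {Min S..Max S} \<longleftrightarrow> (\<forall>s\<in>S. x < s) \<or> (\<forall>s\<in>S. s < x)"
  using assms by (auto simp: Min_gr_iff Max_less_iff not_le)

lemma (in prob_space) prob_outside_range_le_prod_add_prod:
  fixes X :: "'i \<Rightarrow> 'a \<Rightarrow> real"
  assumes "finite I" "I \<noteq> {}" "indep_vars (\<lambda>_. borel) X I"
    and "\<And>j. j \<in> I \<Longrightarrow> X j \<in> borel_measurable M"
  shows "prob {\<omega> \<in> space M. \<theta>0 \<notin> {Min ((\<lambda>j. X j \<omega>) ` I) .. Max ((\<lambda>j. X j \<omega>) ` I)}}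
    \<le> (\<Prod>j\<in>I. prob (X j -` {\<theta>0<..} \<inter> space M)) + (\<Prod>j\<in>I. prob (X j -` {..<\<theta>0} \<inter> space M))"
proof -
  define above where "above = (\<Inter>j\<in>I. X j -` {\<theta>0<..} \<inter> space M)"
  define below where "below = (\<Inter>j\<in>I. X j -` {..<\<theta>0} \<inter> space M)"
  have events: "above \<in> events" "below \<in> events"
    unfolding above_def below_def using assms by (auto intro!: sets.finite_INT)
  have "{\<omega> \<in> space M. \<theta>0 \<notin> {Min ((\<lambda>j. X j \<omega>) ` I) .. Max ((\<lambda>j. X j \<omega>) ` I)}}
      \<subseteq> above \<union> below"
  proof
    fix \<omega>
    assume "\<omega> \<in> {\<omega> \<in> space M. \<theta>0 \<notin> {Min ((\<lambda>j. X j \<omega>) ` I) .. Max ((\<lambda>j. X j \<omega>) ` I)}}"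
    then have "\<omega> \<in> space M" "(\<forall>j\<in>I. \<theta>0 < X j \<omega>) \<or> (\<forall>j\<in>I. X j \<omega> < \<theta>0)"
      using not_in_Min_Max_iff[of "(\<lambda>j. X j \<omega>) ` I" \<theta>0] assms(1,2) by auto
    then show "\<omega> \<in> above \<union> below"
      unfolding above_def below_def using assms(2) by auto
  qed
  then have "prob {\<omega> \<in> space M. \<theta>0 \<notin> {Min ((\<lambda>j. X j \<omega>) ` I) .. Max ((\<lambda>j. X j \<omega>) ` I)}}
      \<le> prob (above \<union> below)"
    using events by (intro finite_measure_mono) auto
  also have "\<dots> \<le> prob above + prob below"
    using events by (intro measure_subadditive) auto
  also have "prob above = (\<Prod>j\<in>I. prob (X j -` {\<theta>0<..} \<inter> space M))"
    unfolding above_def by (rule indep_varsD[OF assms(3)]) (use assms in auto)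
  also have "prob below = (\<Prod>j\<in>I. prob (X j -` {..<\<theta>0} \<inter> space M))"
    unfolding below_def by (rule indep_varsD[OF assms(3)]) (use assms in auto)
  finally show ?thesis .
qed

theorem lemma1:
  fixes M :: "'a measure" and X :: "nat \<Rightarrow> 'a \<Rightarrow> real" and \<theta>0 :: real and B :: nat
  assumes "prob_space M"
    and "B \<ge> 1"
    and "\<And>j. j \<in> {1..B} \<Longrightarrow> X j \<in> borel_measurable M"
    and "prob_space.indep_vars M (\<lambda>_. borel) X {1..B}"
  shows "measure M {\<omega> \<in> space M.
            \<theta>0 \<notin> {Min ((\<lambda>j. X j \<omega>) ` {1..B}) .. Max ((\<lambda>j. X j \<omega>) ` {1..B})}}
         \<le> (1/2 - Max ((\<lambda>j. MedBias M \<theta>0 (X j)) ` {1..B})) ^ B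
           + (1/2 + Max ((\<lambda>j. MedBias M \<theta>0 (X j)) ` {1..B})) ^ B"
proof -
  interpret prob_space M by fact
  define \<Delta> where "\<Delta> = Max ((\<lambda>j. MedBias M \<theta>0 (X j)) ` {1..B})"
  have nonempty: "{1..B} \<noteq> {}" using assms(2) by simp
  have MedBias_le: "MedBias M \<theta>0 (X j) \<le> \<Delta>" if "j \<in> {1..B}" for j
    unfolding \<Delta>_def using that by (intro Max_ge) auto
  have "prob {\<omega> \<in> space M. \<theta>0 \<notin> {Min ((\<lambda>j. X j \<omega>) ` {1..B}) .. Max ((\<lambda>j. X j \<omega>) ` {1..B})}}
      \<le> (\<Prod>j\<in>{1..B}. prob (X j -` {\<theta>0<..} \<inter> space M))
        + (\<Prod>j\<in>{1..B}. prob (X j -` {..<\<theta>0} \<inter> space M))"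
    using assms(3,4) nonempty by (intro prob_outside_range_le_prod_add_prod) auto
  also have "\<dots> \<le> (1/2 - \<Delta>) ^ card {1..B} + (1/2 + \<Delta>) ^ card {1..B}"
  proof (rule prod_add_prod_le_power_add_power)
    have "0 \<le> \<Delta>" using MedBias_le[of 1] assms(2) by (simp add: MedBias_def)
    moreover have "\<Delta> \<le> 1/2"
      unfolding \<Delta>_def using nonempty MedBias_le_half by (intro Max.boundedI) auto
    ultimately show "0 \<le> 1/2 - \<Delta>" "1/2 - \<Delta> \<le> 1/2 + \<Delta>" by simp_all
    show "finite {1..B}" "1/2 - \<Delta> + (1/2 + \<Delta>) = 1" by simp_all
    show "0 \<le> prob (X j -` {\<theta>0<..} \<inter> space M) \<and> 0 \<le> prob (X j -` {..<\<theta>0} \<inter> space M)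
        \<and> prob (X j -` {\<theta>0<..} \<inter> space M) \<le> 1/2 + \<Delta> \<and> prob (X j -` {..<\<theta>0} \<inter> space M) \<le> 1/2 + \<Delta>
        \<and> prob (X j -` {\<theta>0<..} \<inter> space M) + prob (X j -` {..<\<theta>0} \<inter> space M) \<le> 1"
      if "j \<in> {1..B}" for j
      using prob_greater_le_half_add_MedBias[OF assms(3)] prob_less_le_half_add_MedBias[OF assms(3)]
        prob_greater_add_prob_less_le_1[OF assms(3)] MedBias_le[OF that] that
      by (smt (verit) measure_nonneg)
  qed
  also have "card {1..B} = B" by simp
  finally show ?thesis by (simp only: \<Delta>_def)
qed

end
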